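(* Let $M_i\subseteq B(H_i)$ and $N_i\subseteq B(K_i)$, $i=1,2$, be finite-dimensional von Neumann algebras on finite-dimensional Hilbert spaces with $M_1\cong M_2$ and $N_1\cong N_2$. Then there is a one-to-one correspondence between quantum multi-relations on the pair $(M_1,N_1)$ and quantum multi-relations on the pair $(M_2,N_2)$.
   Context: For finite-dimensional von Neumann algebras $M\subseteq B(H)$, $N\subseteq B(K)$, a quantum multi-relation on $(M,N)$ is a linear subspace $V\subseteq B(H\otimes K)$ such that (1) $V\subseteq B(H)\otimes N$; (2) $V$ is an $(M'\otimes1)$–$(M'\otimes1)$ bimodule, where $M'$ is the commutant of $M$ in $B(H)$; (3) $(1\otimes Z(N))V\subseteq V$, where $Z(N)=N\cap N'$ is the center of $N$. *)

theory Defs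
  imports "HOL-Analysis.Analysis"
begin

text \<open>Operators on the finite-dimensional Hilbert space complex^'a are represented
  by complex matrices complex^'a^'a (with matrix product **); the Hilbert space
  H tensor K is complex^('h \<times> 'k).\<close>

type_synonym 'a op = "complex^'a^'a"

definition cscale :: "complex \<Rightarrow> 'a::finite op \<Rightarrow> 'a op" where
  "cscale c A = (\<chi> i j. c * A $ i $ j)"

definition adj :: "'a::finite op \<Rightarrow> 'a op" where
  "adj A = (\<chi> i j. cnj (A $ j $ i))"

definition csubspace :: "'a::finite op set \<Rightarrow> bool" where
  "csubspace V \<longleftrightarrow> 0 \<in> V \<and> (\<forall>x\<in>V. \<forall>y\<in>V. x + y \<in> V) \<and> (\<forall>c. \<forall>x\<in>V. cscale c x \<in> V)"

definition cspan :: "'a::finite op set \<Rightarrow> 'a op set" where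
  "cspan S = \<Inter>{V. csubspace V \<and> S \<subseteq> V}"

definition vN_algebra :: "'a::finite op set \<Rightarrow> bool" where
  "vN_algebra M \<longleftrightarrow> csubspace M \<and> mat 1 \<in> M \<and>
     (\<forall>x\<in>M. \<forall>y\<in>M. x ** y \<in> M) \<and> (\<forall>x\<in>M. adj x \<in> M)"

definition commutant :: "'a::finite op set \<Rightarrow> 'a op set" where
  "commutant M = {x. \<forall>a\<in>M. x ** a = a ** x}"

definition center :: "'a::finite op set \<Rightarrow> 'a op set" where
  "center M = M \<inter> commutant M"

definition star_iso :: "('a::finite op \<Rightarrow> 'b::finite op) \<Rightarrow> 'a op set \<Rightarrow> 'b op set \<Rightarrow> bool" where
  "star_iso \<phi> M N \<longleftrightarrow> bij_betw \<phi> M N \<and>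
     (\<forall>x\<in>M. \<forall>y\<in>M. \<phi> (x + y) = \<phi> x + \<phi> y) \<and>
     (\<forall>c. \<forall>x\<in>M. \<phi> (cscale c x) = cscale c (\<phi> x)) \<and>
     (\<forall>x\<in>M. \<forall>y\<in>M. \<phi> (x ** y) = \<phi> x ** \<phi> y) \<and>
     (\<forall>x\<in>M. \<phi> (adj x) = adj (\<phi> x))"

definition vN_isomorphic :: "'a::finite op set \<Rightarrow> 'b::finite op set \<Rightarrow> bool" where
  "vN_isomorphic M N \<longleftrightarrow> (\<exists>\<phi>. star_iso \<phi> M N)"

definition tensor_op :: "'h::finite op \<Rightarrow> 'k::finite op \<Rightarrow> ('h \<times> 'k) op" where
  "tensor_op a b = (\<chi> p q. a $ fst p $ fst q * b $ snd p $ snd q)"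

text \<open>B(H) \<otimes> N as the (algebraic = spatial in finite dimensions) tensor product.\<close>
definition BH_tensor :: "'k::finite op set \<Rightarrow> ('h::finite \<times> 'k) op set" where
  "BH_tensor N = cspan {tensor_op a b | a b. b \<in> N}"

definition quantum_multi_relation ::
  "'h::finite op set \<Rightarrow> 'k::finite op set \<Rightarrow> ('h \<times> 'k) op set \<Rightarrow> bool" where
  "quantum_multi_relation M N V \<longleftrightarrow>
     csubspace V \<and>
     V \<subseteq> BH_tensor N \<and>
     (\<forall>a\<in>commutant M. \<forall>b\<in>commutant M. \<forall>v\<in>V.
        tensor_op a (mat 1) ** v ** tensor_op b (mat 1) \<in> V) \<and>
     (\<forall>z\<in>center N. \<forall>v\<in>V. tensor_op (mat 1) z ** v \<in> V)"

end

theory Submission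
  imports Defs
begin

text \<open>
  The two algebras are exchanged one at a time.

  A *-isomorphism \<psi> : N1 \<rightarrow> N2 applied to each block X_ij \<in> N1 of an operator
  X \<in> B(H) \<otimes> N1 commutes with the actions of M' \<otimes> 1 and 1 \<otimes> Z(N), so V \<mapsto> \<psi>(V) is a
  bijection of quantum multi-relations.

  For a *-isomorphism \<phi> : M1 \<rightarrow> M2 consider the intertwiners A = {c. \<forall>x\<in>M1. c x = \<phi>(x) c}
  and B = {d. \<forall>x\<in>M1. d \<phi>(x) = x d}. Then B A \<subseteq> M1', A B \<subseteq> M2', M2' A M1' \<subseteq> A,
  M1' B M2' \<subseteq> B, and there are c_k \<in> A, d_k \<in> B with \<Sum> c_k d_k = 1 (and symmetrically
  \<Sum> d_k c_k = 1). Hence V \<mapsto> span ((A \<otimes> 1) V (B \<otimes> 1)) is a bijection with inverse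
  W \<mapsto> span ((B \<otimes> 1) W (A \<otimes> 1)). The c_k come from the unital left M1-module map
  G = \<phi> \<circ> E, where E is the orthogonal projection onto M1: the matrices s with i-th column
  G(e_ij) e_s are intertwiners, S = \<Sum> s s^* commutes with M2 and is injective because
  G(1) = 1, and c = S^(-1) s, d = s^*.
\<close>

section \<open>Matrices, complex subspaces and *-isomorphisms\<close>

definition conj_transpose :: "complex^'n^'m \<Rightarrow> complex^'m^'n" where
  "conj_transpose A = (\<chi> i j. cnj (A $ j $ i))"

lemma adj_eq_conj_transpose: "adj A = conj_transpose A"
  by (simp add: adj_def conj_transpose_def)

lemma conj_transpose_conj_transpose [simp]: "conj_transpose (conj_transpose A) = A"
  by (simp add: conj_transpose_def vec_eq_iff)

lemma conj_transpose_mult: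
  "conj_transpose (A ** B) = conj_transpose B ** conj_transpose A"
  by (simp add: conj_transpose_def matrix_matrix_mult_def vec_eq_iff mult.commute)

definition tensor_mat :: "complex^'n^'m \<Rightarrow> complex^'l^'k \<Rightarrow> complex^('n \<times> 'l)^('m \<times> 'k)" where
  "tensor_mat a b = (\<chi> p q. a $ fst p $ fst q * b $ snd p $ snd q)"

lemma tensor_op_eq_tensor_mat: "tensor_op a b = tensor_mat a b"
  by (simp add: tensor_op_def tensor_mat_def)

lemma tensor_mat_mult: "tensor_mat a b ** tensor_mat c d = tensor_mat (a ** c) (b ** d)"
proof -
  have "(\<Sum>r\<in>UNIV. a $ fst p $ fst r * b $ snd p $ snd r * (c $ fst r $ fst q * d $ snd r $ snd q))
      = (\<Sum>i\<in>UNIV. a $ fst p $ i * c $ i $ fst q) * (\<Sum>j\<in>UNIV. b $ snd p $ j * d $ j $ snd q)"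
    for p q
    by (simp add: sum_product sum.cartesian_product UNIV_Times_UNIV[symmetric] case_prod_beta
        del: UNIV_Times_UNIV) (simp add: ac_simps)
  then show ?thesis
    by (simp add: tensor_mat_def matrix_matrix_mult_def vec_eq_iff)
qed

lemma tensor_mat_mult_ampliation:
  "tensor_mat (a ** c) (mat 1) = tensor_mat a (mat 1) ** tensor_mat c (mat 1)"
  by (simp add: tensor_mat_mult)

lemma tensor_mat_one: "tensor_mat (mat 1) (mat 1) = mat 1"
  by (auto simp: tensor_mat_def mat_def vec_eq_iff prod_eq_iff)

lemma tensor_mat_sum_left: "tensor_mat (\<Sum>i\<in>I. f i) b = (\<Sum>i\<in>I. tensor_mat (f i) b)"
  by (induction I rule: infinite_finite_induct)
    (simp_all add: tensor_mat_def vec_eq_iff distrib_right)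

lemma sum_matrix_mul: "(\<Sum>i\<in>I. f i) ** B = (\<Sum>i\<in>I. f i ** B)"
  by (induction I rule: infinite_finite_induct)
    (simp_all add: matrix_matrix_mult_def vec_eq_iff sum.distrib distrib_right)

lemma matrix_mul_sum: "A ** (\<Sum>i\<in>I. f i) = (\<Sum>i\<in>I. A ** f i)"
  by (induction I rule: infinite_finite_induct) (simp_all add: matrix_add_ldistrib)

lemma matrix_add_rdistrib: "(A + B) ** C = A ** C + B ** C"
  by (simp add: matrix_matrix_mult_def vec_eq_iff sum.distrib distrib_right)

lemma matrix_diff_ldistrib: "A ** (B - C) = A ** B - A ** (C :: complex^_^_)"
  by (simp add: matrix_matrix_mult_def vec_eq_iff sum_subtractf right_diff_distrib)

lemma matrix_mul_cscale_mul: "P ** cscale c Y ** Q = cscale c (P ** Y ** Q)"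
  by (simp add: cscale_def matrix_matrix_mult_def vec_eq_iff sum_distrib_left ac_simps)

lemma matrix_mul_add_mul: "P ** (Y + Z) ** Q = P ** Y ** Q + P ** Z ** Q"
  by (simp add: matrix_add_ldistrib matrix_add_rdistrib)

lemma csubspace_cspan: "csubspace (cspan S)"
  unfolding csubspace_def cspan_def by auto

lemma cspan_superset: "S \<subseteq> cspan S"
  unfolding cspan_def by auto

lemma cspan_minimal: "csubspace W \<Longrightarrow> S \<subseteq> W \<Longrightarrow> cspan S \<subseteq> W"
  unfolding cspan_def by auto

lemma csubspace_sum: "csubspace W \<Longrightarrow> (\<And>i. i \<in> I \<Longrightarrow> f i \<in> W) \<Longrightarrow> sum f I \<in> W"
  by (induction I rule: infinite_finite_induct) (auto simp: csubspace_def)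

lemma csubspace_diff:
  assumes W: "csubspace W" and x: "x \<in> W" and y: "y \<in> W"
  shows "x - y \<in> W"
proof -
  have "cscale (-1) y = - y"
    by (simp add: cscale_def vec_eq_iff)
  then show ?thesis
    using W x y unfolding csubspace_def by (metis diff_conv_add_uminus)
qed

lemma csubspace_imp_subspace:
  fixes W :: "'a::finite op set"
  assumes "csubspace W"
  shows "subspace W"
proof -
  have "scaleR r x = cscale (of_real r) x" for r and x :: "'a op"
    by (simp add: cscale_def vec_eq_iff) (metis scaleR_conv_of_real)
  with assms show ?thesis
    by (simp add: subspace_def csubspace_def)
qed

lemma cspan_map_into:
  assumes add: "\<And>x y. f (x + y) = f x + f y" and scale: "\<And>c x. f (cscale c x) = cscale c (f x)"
    and W: "csubspace W" and S: "\<And>x. x \<in> S \<Longrightarrow> f x \<in> W" and x: "x \<in> cspan S"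
  shows "f x \<in> W"
proof -
  have "f 0 = 0" using add[of 0 0] by simp
  with W have "csubspace {x. f x \<in> W}"
    unfolding csubspace_def by (auto simp: add scale)
  with S have "cspan S \<subseteq> {x. f x \<in> W}"
    by (intro cspan_minimal) auto
  with x show ?thesis by auto
qed

lemma csubspace_image:
  assumes V: "csubspace V"
    and add: "\<And>x y. x \<in> V \<Longrightarrow> y \<in> V \<Longrightarrow> f (x + y) = f x + f y"
    and scale: "\<And>c x. x \<in> V \<Longrightarrow> f (cscale c x) = cscale c (f x)"
  shows "csubspace (f ` V)"
  unfolding csubspace_def
proof (intro conjI ballI allI)
  have "0 \<in> V" and "f 0 = 0"
    using V add[of 0 0] by (simp_all add: csubspace_def)
  then show "0 \<in> f ` V"
    by (metis image_eqI)
next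
  fix y y' assume "y \<in> f ` V" "y' \<in> f ` V"
  then obtain x x' where "x \<in> V" "x' \<in> V" "y = f x" "y' = f x'"
    by auto
  with V show "y + y' \<in> f ` V"
    by (simp add: csubspace_def add[symmetric])
next
  fix c y assume "y \<in> f ` V"
  then obtain x where "x \<in> V" "y = f x"
    by auto
  with V show "cscale c y \<in> f ` V"
    by (simp add: csubspace_def scale[symmetric])
qed

lemma star_iso_in: "star_iso \<psi> N N' \<Longrightarrow> x \<in> N \<Longrightarrow> \<psi> x \<in> N'"
  by (auto simp: star_iso_def bij_betw_def)

lemma star_iso_image: "star_iso \<psi> N N' \<Longrightarrow> \<psi> ` N = N'"
  by (simp add: star_iso_def bij_betw_def)

lemma star_iso_inv_into_left: "star_iso \<psi> N N' \<Longrightarrow> x \<in> N \<Longrightarrow> inv_into N \<psi> (\<psi> x) = x"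
  unfolding star_iso_def by (blast intro: bij_betw_inv_into_left)

lemma star_iso_inv_into_right: "star_iso \<psi> N N' \<Longrightarrow> y \<in> N' \<Longrightarrow> \<psi> (inv_into N \<psi> y) = y"
  unfolding star_iso_def by (blast intro: bij_betw_inv_into_right)

lemma star_iso_zero:
  assumes "star_iso \<psi> N N'" and "csubspace N"
  shows "\<psi> 0 = 0"
proof -
  have "\<psi> (0 + 0) = \<psi> 0 + \<psi> 0"
    using assms unfolding star_iso_def csubspace_def by blast
  then show ?thesis
    by simp
qed

lemma star_iso_lincomb:
  assumes iso: "star_iso \<psi> N N'" and N: "csubspace N" and x: "\<And>i. i \<in> I \<Longrightarrow> x i \<in> N"
  shows "\<psi> (\<Sum>i\<in>I. cscale (c i) (x i)) = (\<Sum>i\<in>I. cscale (c i) (\<psi> (x i)))"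
  using x
proof (induction I rule: infinite_finite_induct)
  case (insert i I)
  have "(\<Sum>i\<in>I. cscale (c i) (x i)) \<in> N"
    using N insert.prems by (intro csubspace_sum) (auto simp: csubspace_def)
  with insert iso N show ?case
    by (simp add: star_iso_def csubspace_def)
qed (simp_all add: star_iso_zero[OF iso N])

lemma star_iso_inv_into:
  assumes N: "vN_algebra N" and iso: "star_iso \<psi> N N'"
  shows "star_iso (inv_into N \<psi>) N' N"
proof -
  let ?\<theta> = "inv_into N \<psi>"
  have bij: "bij_betw ?\<theta> N' N"
    using iso by (simp add: star_iso_def bij_betw_inv_into)
  have \<theta>_in: "?\<theta> y \<in> N" if "y \<in> N'" for y
    using bij that by (auto simp: bij_betw_def)
  have \<theta>_eqI: "?\<theta> y = x" if "x \<in> N" "\<psi> x = y" for x y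
    using iso that by (auto simp: star_iso_def bij_betw_inv_into_left)
  have closed: "\<And>x y. x \<in> N \<Longrightarrow> y \<in> N \<Longrightarrow> x + y \<in> N"
    "\<And>c x. x \<in> N \<Longrightarrow> cscale c x \<in> N" "\<And>x y. x \<in> N \<Longrightarrow> y \<in> N \<Longrightarrow> x ** y \<in> N"
    "\<And>x. x \<in> N \<Longrightarrow> adj x \<in> N"
    using N by (simp_all add: vN_algebra_def csubspace_def)
  have hom: "\<And>x y. x \<in> N \<Longrightarrow> y \<in> N \<Longrightarrow> \<psi> (x + y) = \<psi> x + \<psi> y"
    "\<And>c x. x \<in> N \<Longrightarrow> \<psi> (cscale c x) = cscale c (\<psi> x)"
    "\<And>x y. x \<in> N \<Longrightarrow> y \<in> N \<Longrightarrow> \<psi> (x ** y) = \<psi> x ** \<psi> y"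
    "\<And>x. x \<in> N \<Longrightarrow> \<psi> (adj x) = adj (\<psi> x)"
    using iso by (simp_all add: star_iso_def)
  show ?thesis
    unfolding star_iso_def
  proof (intro conjI ballI allI bij)
    fix x y assume xy: "x \<in> N'" "y \<in> N'"
    show "?\<theta> (x + y) = ?\<theta> x + ?\<theta> y"
      by (rule \<theta>_eqI) (simp_all add: closed hom \<theta>_in star_iso_inv_into_right[OF iso] xy)
    show "?\<theta> (x ** y) = ?\<theta> x ** ?\<theta> y"
      by (rule \<theta>_eqI) (simp_all add: closed hom \<theta>_in star_iso_inv_into_right[OF iso] xy)
    show "?\<theta> (cscale c x) = cscale c (?\<theta> x)" for c
      by (rule \<theta>_eqI) (simp_all add: closed hom \<theta>_in star_iso_inv_into_right[OF iso] xy)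
    show "?\<theta> (adj x) = adj (?\<theta> x)"
      by (rule \<theta>_eqI) (simp_all add: closed hom \<theta>_in star_iso_inv_into_right[OF iso] xy)
  qed
qed

lemma star_iso_center:
  assumes iso: "star_iso \<psi> N N'" and z: "z \<in> center N"
  shows "\<psi> z \<in> center N'"
proof -
  have zN: "z \<in> N" and comm: "\<And>x. x \<in> N \<Longrightarrow> z ** x = x ** z"
    using z by (auto simp: center_def commutant_def)
  have "\<psi> z ** \<psi> x = \<psi> x ** \<psi> z" if x: "x \<in> N" for x
  proof -
    have "\<psi> z ** \<psi> x = \<psi> (z ** x)"
      using iso zN x by (simp add: star_iso_def)
    also have "\<dots> = \<psi> x ** \<psi> z"
      using iso zN x by (simp add: star_iso_def comm[OF x])
    finally show ?thesis .
  qed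
  then show ?thesis
    using star_iso_image[OF iso] star_iso_in[OF iso zN] by (auto simp: center_def commutant_def)
qed

lemma star_iso_one:
  assumes N: "vN_algebra N" and N': "vN_algebra N'" and iso: "star_iso \<psi> N N'"
  shows "\<psi> (mat 1) = mat 1"
proof -
  obtain u where u: "u \<in> N" "\<psi> u = mat 1"
    using N' star_iso_image[OF iso] by (auto simp: vN_algebra_def)
  have "\<psi> (mat 1 ** u) = \<psi> (mat 1) ** \<psi> u"
    using N iso u(1) by (simp add: vN_algebra_def star_iso_def del: matrix_mul_lid)
  then show ?thesis
    using u by simp
qed

lemma star_iso_center_image:
  assumes N: "vN_algebra N" and iso: "star_iso \<psi> N N'"
  shows "\<psi> ` center N = center N'"
proof
  show "\<psi> ` center N \<subseteq> center N'"
    using star_iso_center[OF iso] by blast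
  show "center N' \<subseteq> \<psi> ` center N"
  proof
    fix z assume z: "z \<in> center N'"
    then have "z = \<psi> (inv_into N \<psi> z)"
      using star_iso_inv_into_right[OF iso] by (simp add: center_def)
    then show "z \<in> \<psi> ` center N"
      using star_iso_center[OF star_iso_inv_into[OF N iso] z] by blast
  qed
qed

section \<open>Blocks and the change of the right algebra\<close>

definition block :: "'h \<Rightarrow> 'h \<Rightarrow> ('h::finite \<times> 'k::finite) op \<Rightarrow> 'k op" where
  "block i j X = (\<chi> k l. X $ (i, k) $ (j, l))"

definition matrix_unit :: "'a \<Rightarrow> 'a \<Rightarrow> 'a::finite op" where
  "matrix_unit i j = (\<chi> p q. if p = i \<and> q = j then 1 else 0)"

lemma block_component [simp]: "block i j X $ k $ l = X $ (i, k) $ (j, l)"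
  by (simp add: block_def)

lemma matrix_eq_iff_blocks: "X = Y \<longleftrightarrow> (\<forall>i j. block i j X = block i j Y)"
  by (auto simp: vec_eq_iff)

lemma block_zero [simp]: "block i j 0 = 0"
  by (simp add: vec_eq_iff)

lemma block_add: "block i j (X + Y) = block i j X + block i j Y"
  by (simp add: vec_eq_iff)

lemma block_cscale: "block i j (cscale c X) = cscale c (block i j X)"
  by (simp add: cscale_def vec_eq_iff)

lemma block_tensor_op: "block i j (tensor_op a b) = cscale (a $ i $ j) b"
  by (simp add: cscale_def tensor_op_def vec_eq_iff)

lemma sum_tensor_op_blocks:
  "(\<Sum>(i, j)\<in>UNIV. tensor_op (matrix_unit i j) (block i j X)) = X"
proof -
  have "(\<Sum>(i, j)\<in>UNIV. tensor_op (matrix_unit i j) (block i j X) $ p $ q)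
      = (\<Sum>ij\<in>UNIV. if ij = (fst p, fst q) then X $ p $ q else 0)" for p q :: "'a \<times> 'b"
    by (rule sum.cong) (auto simp: tensor_op_def matrix_unit_def split: if_splits)
  then show ?thesis
    by (simp add: vec_eq_iff sum_component case_prod_beta)
qed

lemma BH_tensor_eq_blocks:
  assumes N: "csubspace N"
  shows "BH_tensor N = {X. \<forall>i j. block i j X \<in> N}"
proof
  from N have "csubspace {X. \<forall>i j. block i j X \<in> N}"
    by (simp add: csubspace_def block_add block_cscale)
  moreover have "{tensor_op a b | a b. b \<in> N} \<subseteq> {X. \<forall>i j. block i j X \<in> N}"
    using N by (auto simp: block_tensor_op csubspace_def)
  ultimately show "BH_tensor N \<subseteq> {X. \<forall>i j. block i j X \<in> N}"
    unfolding BH_tensor_def by (rule cspan_minimal)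
next
  show "{X. \<forall>i j. block i j X \<in> N} \<subseteq> BH_tensor N"
  proof
    fix X assume "X \<in> {X. \<forall>i j. block i j X \<in> N}"
    then have "tensor_op (matrix_unit i j) (block i j X) \<in> BH_tensor N" for i j
      unfolding BH_tensor_def by (blast intro: cspan_superset[THEN subsetD])
    then have "(\<Sum>(i, j)\<in>UNIV. tensor_op (matrix_unit i j) (block i j X)) \<in> BH_tensor N"
      unfolding BH_tensor_def by (intro csubspace_sum csubspace_cspan) auto
    then show "X \<in> BH_tensor N"
      by (simp only: sum_tensor_op_blocks)
  qed
qed

lemma sum_UNIV_pair: "(\<Sum>p\<in>UNIV. f p) = (\<Sum>x\<in>UNIV. \<Sum>y\<in>UNIV. f (x, y))"
  by (simp add: sum.cartesian_product UNIV_Times_UNIV[symmetric] del: UNIV_Times_UNIV)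

lemma ampliation_mult_component:
  "(tensor_op a (mat 1) ** X) $ (i, r) $ q = (\<Sum>k\<in>UNIV. a $ i $ k * X $ (k, r) $ q)"
  by (simp add: matrix_matrix_mult_def tensor_op_def mat_def sum_UNIV_pair
      if_distrib if_distribR sum.delta cong: if_cong)

lemma mult_ampliation_component:
  "(X ** tensor_op b (mat 1)) $ p $ (j, s) = (\<Sum>l\<in>UNIV. X $ p $ (l, s) * b $ l $ j)"
  by (simp add: matrix_matrix_mult_def tensor_op_def mat_def sum_UNIV_pair
      if_distrib if_distribR sum.delta' cong: if_cong)

lemma block_ampliation_sandwich:
  "block i j (tensor_op a (mat 1) ** X ** tensor_op b (mat 1))
     = (\<Sum>(k, l)\<in>UNIV. cscale (a $ i $ k * b $ l $ j) (block k l X))"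
proof -
  have "(tensor_op a (mat 1) ** X ** tensor_op b (mat 1)) $ (i, r) $ (j, s)
      = (\<Sum>l\<in>UNIV. (\<Sum>k\<in>UNIV. a $ i $ k * X $ (k, r) $ (l, s)) * b $ l $ j)" for r s
    by (simp add: mult_ampliation_component ampliation_mult_component)
  also have "\<dots> r s = (\<Sum>k\<in>UNIV. \<Sum>l\<in>UNIV. a $ i $ k * b $ l $ j * X $ (k, r) $ (l, s))" for r s
    by (subst sum.swap) (simp add: sum_distrib_left sum_distrib_right ac_simps)
  finally show ?thesis
    by (simp add: vec_eq_iff sum_component cscale_def sum_UNIV_pair)
qed

lemma block_identity_tensor_mult: "block i j (tensor_op (mat 1) z ** X) = z ** block i j X"
proof -
  have "(tensor_op (mat 1) z ** X) $ (i, r) $ q = (\<Sum>k\<in>UNIV. z $ r $ k * X $ (i, k) $ q)" for r q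
    by (simp add: matrix_matrix_mult_def tensor_op_def mat_def sum_UNIV_pair
        if_distrib if_distribR cong: if_cong) (subst sum.swap, simp add: sum.delta)
  then show ?thesis
    by (simp add: vec_eq_iff matrix_matrix_mult_def)
qed

definition map_blocks ::
  "('k1::finite op \<Rightarrow> 'k2::finite op) \<Rightarrow> ('h::finite \<times> 'k1) op \<Rightarrow> ('h \<times> 'k2) op"
  where "map_blocks \<psi> X = (\<chi> p q. \<psi> (block (fst p) (fst q) X) $ snd p $ snd q)"

lemma block_map_blocks [simp]: "block i j (map_blocks \<psi> X) = \<psi> (block i j X)"
  by (simp add: map_blocks_def vec_eq_iff)

lemma map_blocks_sandwich:
  assumes iso: "star_iso \<psi> N N'" and N: "csubspace N" and X: "X \<in> BH_tensor N"
  shows "map_blocks \<psi> (tensor_op a (mat 1) ** X ** tensor_op b (mat 1))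
    = tensor_op a (mat 1) ** map_blocks \<psi> X ** tensor_op b (mat 1)"
proof -
  have "block k l X \<in> N" for k l
    using X BH_tensor_eq_blocks[OF N] by blast
  then have "\<psi> (block i j (tensor_op a (mat 1) ** X ** tensor_op b (mat 1)))
      = block i j (tensor_op a (mat 1) ** map_blocks \<psi> X ** tensor_op b (mat 1))" for i j
    using star_iso_lincomb[OF iso N, of UNIV "\<lambda>(k, l). block k l X" "\<lambda>(k, l). a $ i $ k * b $ l $ j"]
    by (simp add: block_ampliation_sandwich case_prod_beta)
  then show ?thesis
    by (simp add: matrix_eq_iff_blocks)
qed

lemma map_blocks_identity_tensor_mult:
  assumes iso: "star_iso \<psi> N N'" and N: "csubspace N" and z: "z \<in> N" and X: "X \<in> BH_tensor N"
  shows "map_blocks \<psi> (tensor_op (mat 1) z ** X) = tensor_op (mat 1) (\<psi> z) ** map_blocks \<psi> X"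
proof -
  have "block k l X \<in> N" for k l
    using X BH_tensor_eq_blocks[OF N] by blast
  with iso z show ?thesis
    by (simp add: matrix_eq_iff_blocks block_identity_tensor_mult star_iso_def)
qed

lemma map_blocks_image_inverse:
  assumes N: "csubspace N" and inv: "\<And>x. x \<in> N \<Longrightarrow> \<theta> (\<psi> x) = x" and V: "V \<subseteq> BH_tensor N"
  shows "map_blocks \<theta> ` map_blocks \<psi> ` V = V"
proof -
  have "map_blocks \<theta> (map_blocks \<psi> X) = X" if "X \<in> V" for X
  proof -
    have "block k l X \<in> N" for k l
      using that V BH_tensor_eq_blocks[OF N] by blast
    with inv show ?thesis
      by (simp add: matrix_eq_iff_blocks)
  qed
  then show ?thesis
    by (force simp: image_image)
qed

lemma quantum_multi_relation_map_blocks: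
  assumes N: "vN_algebra N" and N': "vN_algebra N'" and iso: "star_iso \<psi> N N'"
    and V: "quantum_multi_relation M N V"
  shows "quantum_multi_relation M N' (map_blocks \<psi> ` V)"
proof -
  have CN: "csubspace N" and CN': "csubspace N'"
    using N N' by (auto simp: vN_algebra_def)
  have CV: "csubspace V" and VB: "V \<subseteq> BH_tensor N"
    and sandwich: "\<And>a b X. a \<in> commutant M \<Longrightarrow> b \<in> commutant M \<Longrightarrow> X \<in> V \<Longrightarrow>
        tensor_op a (mat 1) ** X ** tensor_op b (mat 1) \<in> V"
    and center: "\<And>z X. z \<in> center N \<Longrightarrow> X \<in> V \<Longrightarrow> tensor_op (mat 1) z ** X \<in> V"
    using V unfolding quantum_multi_relation_def by auto
  have blocks: "X \<in> V \<Longrightarrow> block i j X \<in> N" for X i j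
    using VB BH_tensor_eq_blocks[OF CN] by blast
  have "csubspace (map_blocks \<psi> ` V)"
    using CV by (rule csubspace_image) (use iso blocks in \<open>simp_all add: matrix_eq_iff_blocks
        block_add block_cscale star_iso_def\<close>)
  moreover have "map_blocks \<psi> ` V \<subseteq> BH_tensor N'"
    using blocks star_iso_in[OF iso] by (auto simp: BH_tensor_eq_blocks[OF CN'])
  moreover have "tensor_op a (mat 1) ** Y ** tensor_op b (mat 1) \<in> map_blocks \<psi> ` V"
    if a: "a \<in> commutant M" and b: "b \<in> commutant M" and Y: "Y \<in> map_blocks \<psi> ` V" for a b Y
  proof -
    obtain X where X: "X \<in> V" "Y = map_blocks \<psi> X"
      using Y by auto
    then have "tensor_op a (mat 1) ** Y ** tensor_op b (mat 1)
        = map_blocks \<psi> (tensor_op a (mat 1) ** X ** tensor_op b (mat 1))"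
      using map_blocks_sandwich[OF iso CN subsetD[OF VB X(1)]] by simp
    then show ?thesis
      using sandwich[OF a b X(1)] by simp
  qed
  moreover have "tensor_op (mat 1) z ** Y \<in> map_blocks \<psi> ` V"
    if z: "z \<in> center N'" and Y: "Y \<in> map_blocks \<psi> ` V" for z Y
  proof -
    obtain z0 where z0: "z0 \<in> center N" "z = \<psi> z0"
      using z star_iso_center_image[OF N iso] by blast
    obtain X where X: "X \<in> V" "Y = map_blocks \<psi> X"
      using Y by auto
    then have "tensor_op (mat 1) z ** Y = map_blocks \<psi> (tensor_op (mat 1) z0 ** X)"
      using map_blocks_identity_tensor_mult[OF iso CN _ subsetD[OF VB X(1)]] z0
      by (simp add: center_def)
    then show ?thesis
      using center[OF z0(1) X(1)] by simp
  qed
  ultimately show ?thesis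
    unfolding quantum_multi_relation_def by blast
qed

lemma bij_betw_quantum_multi_relations_right:
  assumes N: "vN_algebra N" and N': "vN_algebra N'" and iso: "star_iso \<psi> N N'"
  shows "bij_betw (image (map_blocks \<psi>))
    {V. quantum_multi_relation M N V} {V. quantum_multi_relation M N' V}"
proof -
  let ?\<theta> = "inv_into N \<psi>"
  have iso': "star_iso ?\<theta> N' N"
    using N iso by (rule star_iso_inv_into)
  have CN: "csubspace N" and CN': "csubspace N'"
    using N N' by (auto simp: vN_algebra_def)
  show ?thesis
  proof (rule bij_betw_byWitness[where f' = "image (map_blocks ?\<theta>)"])
    show "\<forall>V\<in>{V. quantum_multi_relation M N V}. map_blocks ?\<theta> ` map_blocks \<psi> ` V = V"
      using map_blocks_image_inverse[of N ?\<theta> \<psi>, OF CN star_iso_inv_into_left[OF iso]]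
      by (auto simp: quantum_multi_relation_def)
    show "\<forall>V\<in>{V. quantum_multi_relation M N' V}. map_blocks \<psi> ` map_blocks ?\<theta> ` V = V"
      using map_blocks_image_inverse[of N' \<psi> ?\<theta>, OF CN' star_iso_inv_into_right[OF iso]]
      by (auto simp: quantum_multi_relation_def)
    show "image (map_blocks \<psi>) ` {V. quantum_multi_relation M N V} \<subseteq> {V. quantum_multi_relation M N' V}"
      using quantum_multi_relation_map_blocks[OF N N' iso] by auto
    show "image (map_blocks ?\<theta>) ` {V. quantum_multi_relation M N' V} \<subseteq> {V. quantum_multi_relation M N V}"
      using quantum_multi_relation_map_blocks[OF N' N iso'] by auto
  qed
qed

section \<open>Conditional expectation and intertwiners\<close>

lemma inner_cvec: "inner (x :: complex^'n) y = Re (\<Sum>i\<in>UNIV. x $ i * cnj (y $ i))"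
  by (simp add: inner_vec_def inner_complex_def)

lemma inner_cmat: "inner (X :: complex^'n^'m) Y = Re (\<Sum>i\<in>UNIV. \<Sum>j\<in>UNIV. X $ i $ j * cnj (Y $ i $ j))"
  by (simp add: inner_vec_def inner_complex_def)

lemma inner_matrix_vector_mult: "inner (A *v x) y = inner x (conj_transpose A *v y)"
proof -
  have "(\<Sum>i\<in>UNIV. (A *v x) $ i * cnj (y $ i)) = (\<Sum>i\<in>UNIV. \<Sum>k\<in>UNIV. A $ i $ k * x $ k * cnj (y $ i))"
    by (simp add: matrix_vector_mult_def sum_distrib_right)
  also have "\<dots> = (\<Sum>k\<in>UNIV. x $ k * cnj ((conj_transpose A *v y) $ k))"
    by (subst sum.swap) (simp add: matrix_vector_mult_def conj_transpose_def sum_distrib_left ac_simps)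
  finally show ?thesis
    by (simp only: inner_cvec)
qed

lemma sum_reverse3: "(\<Sum>i\<in>A. \<Sum>j\<in>B. \<Sum>k\<in>C. f i j k) = (\<Sum>k\<in>C. \<Sum>j\<in>B. \<Sum>i\<in>A. f i j k)"
proof -
  have "(\<Sum>i\<in>A. \<Sum>j\<in>B. \<Sum>k\<in>C. f i j k) = (\<Sum>i\<in>A. \<Sum>k\<in>C. \<Sum>j\<in>B. f i j k)"
    by (rule sum.cong[OF refl], rule sum.swap)
  also have "\<dots> = (\<Sum>k\<in>C. \<Sum>i\<in>A. \<Sum>j\<in>B. f i j k)"
    by (rule sum.swap)
  also have "\<dots> = (\<Sum>k\<in>C. \<Sum>j\<in>B. \<Sum>i\<in>A. f i j k)"
    by (rule sum.cong[OF refl], rule sum.swap)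
  finally show ?thesis .
qed

lemma inner_matrix_mult_left: "inner (A ** Z) W = inner Z (conj_transpose A ** W)"
proof -
  have "(\<Sum>i\<in>UNIV. \<Sum>j\<in>UNIV. (A ** Z) $ i $ j * cnj (W $ i $ j))
      = (\<Sum>i\<in>UNIV. \<Sum>j\<in>UNIV. \<Sum>k\<in>UNIV. A $ i $ k * Z $ k $ j * cnj (W $ i $ j))"
    by (simp add: matrix_matrix_mult_def sum_distrib_right)
  also have "\<dots> = (\<Sum>k\<in>UNIV. \<Sum>j\<in>UNIV. \<Sum>i\<in>UNIV. A $ i $ k * Z $ k $ j * cnj (W $ i $ j))"
    by (rule sum_reverse3)
  also have "\<dots> = (\<Sum>k\<in>UNIV. \<Sum>j\<in>UNIV. Z $ k $ j * cnj ((conj_transpose A ** W) $ k $ j))"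
    by (simp add: matrix_matrix_mult_def conj_transpose_def sum_distrib_left ac_simps)
  finally show ?thesis
    by (simp only: inner_cmat)
qed

lemma inner_cscale: "inner (cscale c X) Y = inner X (cscale (cnj c) Y)"
  by (simp add: inner_cmat cscale_def ac_simps)

text \<open>The real inner product of complex matrices is the real part of the Hilbert-Schmidt
  inner product, so orthogonal projection onto a complex subspace for it is still complex
  linear.\<close>
definition orth_proj :: "'a::finite op set \<Rightarrow> 'a op \<Rightarrow> 'a op" where
  "orth_proj W x = (SOME y. y \<in> W \<and> (\<forall>w\<in>W. inner (x - y) w = 0))"

lemma orth_proj:
  assumes "csubspace W"
  shows "orth_proj W x \<in> W" and "w \<in> W \<Longrightarrow> inner (x - orth_proj W x) w = 0"
proof -
  obtain y z where "y \<in> span W" "\<And>w. w \<in> span W \<Longrightarrow> orthogonal z w" "x = y + z"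
    using orthogonal_subspace_decomp_exists[of W x] by metis
  moreover have "span W = W"
    using assms by (simp add: csubspace_imp_subspace)
  ultimately have "\<exists>y. y \<in> W \<and> (\<forall>w\<in>W. inner (x - y) w = 0)"
    by (auto simp: orthogonal_def)
  from someI_ex[OF this] show "orth_proj W x \<in> W" and "w \<in> W \<Longrightarrow> inner (x - orth_proj W x) w = 0"
    unfolding orth_proj_def by auto
qed

lemma orth_proj_unique:
  assumes W: "csubspace W" and y: "y \<in> W" and orth: "\<And>w. w \<in> W \<Longrightarrow> inner (x - y) w = 0"
  shows "orth_proj W x = y"
proof -
  have d: "orth_proj W x - y \<in> W"
    using csubspace_diff[OF W orth_proj(1)[OF W] y] .
  have "inner (orth_proj W x - y) (orth_proj W x - y)
      = inner (x - y) (orth_proj W x - y) - inner (x - orth_proj W x) (orth_proj W x - y)"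
    by (simp add: inner_diff_left)
  also have "\<dots> = 0"
    using orth orth_proj(2)[OF W] d by simp
  finally show ?thesis
    by simp
qed

lemma orth_proj_id: "csubspace W \<Longrightarrow> x \<in> W \<Longrightarrow> orth_proj W x = x"
  by (rule orth_proj_unique) auto

lemma orth_proj_add:
  assumes W: "csubspace W"
  shows "orth_proj W (x + y) = orth_proj W x + orth_proj W y"
proof (rule orth_proj_unique[OF W])
  show "orth_proj W x + orth_proj W y \<in> W"
    using W orth_proj(1)[OF W] by (simp add: csubspace_def)
  have eq: "x + y - (orth_proj W x + orth_proj W y) = (x - orth_proj W x) + (y - orth_proj W y)"
    by (simp add: algebra_simps)
  show "inner (x + y - (orth_proj W x + orth_proj W y)) w = 0" if "w \<in> W" for w
    unfolding eq using that by (simp only: inner_add_left orth_proj(2)[OF W] add_0)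
qed

lemma orth_proj_cscale:
  assumes W: "csubspace W"
  shows "orth_proj W (cscale c x) = cscale c (orth_proj W x)"
proof (rule orth_proj_unique[OF W])
  show "cscale c (orth_proj W x) \<in> W"
    using W orth_proj(1)[OF W] by (simp add: csubspace_def)
  have "cscale c x - cscale c (orth_proj W x) = cscale c (x - orth_proj W x)"
    by (simp add: cscale_def vec_eq_iff algebra_simps)
  moreover have "cscale (cnj c) w \<in> W" if "w \<in> W" for w
    using W that by (simp add: csubspace_def)
  ultimately show "inner (cscale c x - cscale c (orth_proj W x)) w = 0" if "w \<in> W" for w
    using that by (simp add: inner_cscale orth_proj(2)[OF W])
qed

lemma orth_proj_mult_left:
  assumes M: "vN_algebra M" and a: "a \<in> M"
  shows "orth_proj M (a ** x) = a ** orth_proj M x"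
proof -
  have W: "csubspace M"
    using M by (simp add: vN_algebra_def)
  show ?thesis
  proof (rule orth_proj_unique[OF W])
    show "a ** orth_proj M x \<in> M"
      using M a orth_proj(1)[OF W] by (simp add: vN_algebra_def)
    have "conj_transpose a ** w \<in> M" if "w \<in> M" for w
      using M a that by (simp add: vN_algebra_def flip: adj_eq_conj_transpose)
    then show "inner (a ** x - a ** orth_proj M x) w = 0" if "w \<in> M" for w
      using that by (simp add: inner_matrix_mult_left orth_proj(2)[OF W] flip: matrix_diff_ldistrib)
  qed
qed

lemma orth_proj_module_map:
  assumes M1: "vN_algebra M1" and M2: "vN_algebra M2" and iso: "star_iso \<phi> M1 M2"
  shows "Modules.additive (\<lambda>x. \<phi> (orth_proj M1 x))"
    and "\<phi> (orth_proj M1 (cscale c x)) = cscale c (\<phi> (orth_proj M1 x))"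
    and "x \<in> M1 \<Longrightarrow> \<phi> (orth_proj M1 (x ** y)) = \<phi> x ** \<phi> (orth_proj M1 y)"
    and "\<phi> (orth_proj M1 (mat 1)) = mat 1"
proof -
  have W: "csubspace M1"
    using M1 by (simp add: vN_algebra_def)
  show "Modules.additive (\<lambda>x. \<phi> (orth_proj M1 x))"
    using iso by (simp add: Modules.additive_def orth_proj_add[OF W] orth_proj(1)[OF W] star_iso_def)
  show "\<phi> (orth_proj M1 (cscale c x)) = cscale c (\<phi> (orth_proj M1 x))"
    using iso by (simp add: orth_proj_cscale[OF W] orth_proj(1)[OF W] star_iso_def)
  show "x \<in> M1 \<Longrightarrow> \<phi> (orth_proj M1 (x ** y)) = \<phi> x ** \<phi> (orth_proj M1 y)"
    using iso by (simp add: orth_proj_mult_left[OF M1] orth_proj(1)[OF W] star_iso_def)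
  show "\<phi> (orth_proj M1 (mat 1)) = mat 1"
    using M1 by (simp add: orth_proj_id[OF W] star_iso_one[OF M1 M2 iso] vN_algebra_def)
qed

definition intertwiners :: "('a::finite op \<Rightarrow> 'b::finite op) \<Rightarrow> 'a op set \<Rightarrow> (complex^'a^'b) set"
  where "intertwiners \<phi> M = {c. \<forall>x\<in>M. c ** x = \<phi> x ** c}"

lemma commutant_mult_intertwiner:
  assumes \<phi>: "\<phi> ` M \<subseteq> M'" and a: "a \<in> commutant M'" and c: "c \<in> intertwiners \<phi> M"
  shows "a ** c \<in> intertwiners \<phi> M"
proof -
  have "a ** c ** x = \<phi> x ** (a ** c)" if x: "x \<in> M" for x
  proof -
    have "c ** x = \<phi> x ** c" and "a ** \<phi> x = \<phi> x ** a"
      using \<phi> a c x by (auto simp: intertwiners_def commutant_def)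
    then show ?thesis
      by (simp add: matrix_mul_assoc[symmetric]) (simp add: matrix_mul_assoc)
  qed
  then show ?thesis
    by (simp add: intertwiners_def)
qed

lemma intertwiner_mult_commutant:
  assumes c: "c \<in> intertwiners \<phi> M" and b: "b \<in> commutant M"
  shows "c ** b \<in> intertwiners \<phi> M"
proof -
  have "c ** b ** x = \<phi> x ** (c ** b)" if x: "x \<in> M" for x
  proof -
    have "c ** x = \<phi> x ** c" and "b ** x = x ** b"
      using b c x by (auto simp: intertwiners_def commutant_def)
    then show ?thesis
      by (simp add: matrix_mul_assoc[symmetric]) (simp add: matrix_mul_assoc)
  qed
  then show ?thesis
    by (simp add: intertwiners_def)
qed

lemma intertwiner_mult_intertwiner:
  assumes c: "c \<in> intertwiners \<phi> M" and d: "d \<in> intertwiners \<theta> M'"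
    and inv: "\<And>x. x \<in> M \<Longrightarrow> \<phi> x \<in> M' \<and> \<theta> (\<phi> x) = x"
  shows "d ** c \<in> commutant M"
proof -
  have "d ** c ** x = x ** (d ** c)" if x: "x \<in> M" for x
  proof -
    have "c ** x = \<phi> x ** c" and "d ** \<phi> x = x ** d"
      using c d inv[OF x] x by (auto simp: intertwiners_def)
    then show ?thesis
      by (simp add: matrix_mul_assoc[symmetric]) (simp add: matrix_mul_assoc)
  qed
  then show ?thesis
    by (simp add: commutant_def)
qed

lemma conj_transpose_intertwiner:
  assumes M: "vN_algebra M" and iso: "star_iso \<phi> M M'" and c: "c \<in> intertwiners \<phi> M"
  shows "conj_transpose c \<in> intertwiners (inv_into M \<phi>) M'"
proof -
  have "conj_transpose c ** \<phi> x = x ** conj_transpose c" if x: "x \<in> M" for x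
  proof -
    have "c ** adj x = adj (\<phi> x) ** c"
      using M iso c x by (simp add: vN_algebra_def star_iso_def intertwiners_def)
    then have "conj_transpose (c ** conj_transpose x) = conj_transpose (conj_transpose (\<phi> x) ** c)"
      by (simp add: adj_eq_conj_transpose)
    then show ?thesis
      by (simp add: conj_transpose_mult)
  qed
  then show ?thesis
    using star_iso_image[OF iso] star_iso_inv_into_left[OF iso] by (auto simp: intertwiners_def)
qed

lemma sum_in_commutant: "(\<And>i. i \<in> I \<Longrightarrow> f i \<in> commutant M) \<Longrightarrow> sum f I \<in> commutant M"
  by (simp add: commutant_def sum_matrix_mul matrix_mul_sum)

lemma inverse_in_commutant:
  assumes "S \<in> commutant M" and "T ** S = mat 1" and "S ** T = mat 1"
  shows "T \<in> commutant M"
proof -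
  have "T ** a = a ** T" if "a \<in> M" for a
  proof -
    have "T ** a = T ** a ** (S ** T)"
      by (simp add: assms(3))
    also have "\<dots> = T ** (S ** a) ** T"
      using assms(1) that by (simp add: commutant_def matrix_mul_assoc)
    also have "\<dots> = a ** T"
      by (simp add: matrix_mul_assoc assms(2))
    finally show ?thesis .
  qed
  then show ?thesis
    by (simp add: commutant_def)
qed

lemma sum_matrix_unit_diagonal: "(\<Sum>j\<in>UNIV. matrix_unit j j) = mat 1"
proof -
  have "(\<Sum>j\<in>UNIV. if p = j \<and> q = j then 1 else 0) = (if p = q then 1 else (0::complex))" for p q :: 'a
    by (cases "p = q") (auto intro!: sum.neutral)
  then show ?thesis
    by (simp add: vec_eq_iff matrix_unit_def mat_def sum_component)
qed

lemma matrix_mult_matrix_unit: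
  "x ** matrix_unit i j = (\<Sum>l\<in>UNIV. cscale (x $ l $ i) (matrix_unit l j))"
proof -
  have "(\<Sum>k\<in>UNIV. x $ p $ k * (if k = i \<and> q = j then 1 else 0))
      = (\<Sum>l\<in>UNIV. x $ l $ i * (if p = l \<and> q = j then 1 else 0))" for p q
    by (cases "q = j") (simp_all add: if_distrib cong: if_cong)
  then show ?thesis
    by (simp add: vec_eq_iff matrix_unit_def matrix_matrix_mult_def cscale_def sum_component)
qed

lemma sum_matrix_vector_mult: "(\<Sum>i\<in>I. f i) *v v = (\<Sum>i\<in>I. f i *v v)"
  by (induction I rule: infinite_finite_induct) (simp_all add: matrix_vector_mult_add_rdistrib)

definition slice :: "('a::finite op \<Rightarrow> 'b::finite op) \<Rightarrow> 'a \<times> 'b \<Rightarrow> complex^'a^'b" where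
  "slice G k = (\<chi> r i. G (matrix_unit i (fst k)) $ r $ snd k)"

lemma slice_intertwiner:
  assumes add: "Modules.additive G" and scale: "\<And>c x. G (cscale c x) = cscale c (G x)"
    and mult: "\<And>x y. x \<in> M \<Longrightarrow> G (x ** y) = \<phi> x ** G y"
  shows "slice G k \<in> intertwiners \<phi> M"
proof -
  have "slice G k ** x = \<phi> x ** slice G k" if x: "x \<in> M" for x
  proof -
    have "\<phi> x ** G (matrix_unit i (fst k)) = G (x ** matrix_unit i (fst k))" for i
      by (simp add: mult x)
    also have "\<dots> i = (\<Sum>l\<in>UNIV. cscale (x $ l $ i) (G (matrix_unit l (fst k))))" for i
      by (simp add: matrix_mult_matrix_unit Modules.additive.sum[OF add] scale)
    finally show ?thesis
      by (simp add: slice_def vec_eq_iff matrix_matrix_mult_def cscale_def sum_component ac_simps)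
  qed
  then show ?thesis
    by (simp add: intertwiners_def)
qed

lemma slice_conj_transpose_kernel:
  assumes add: "Modules.additive G" and one: "G (mat 1) = mat 1"
    and kernel: "\<And>k. conj_transpose (slice G k) *v v = 0"
  shows "v = 0"
proof -
  have "v $ m = (\<Sum>j\<in>UNIV. (conj_transpose (slice G (j, m)) *v v) $ j)" for m
  proof -
    have "(\<Sum>j\<in>UNIV. (conj_transpose (slice G (j, m)) *v v) $ j)
        = (\<Sum>s\<in>UNIV. \<Sum>j\<in>UNIV. cnj (G (matrix_unit j j) $ s $ m) * v $ s)"
      by (subst sum.swap) (simp add: conj_transpose_def slice_def matrix_vector_mult_def)
    also have "\<dots> = (\<Sum>s\<in>UNIV. cnj (G (\<Sum>j\<in>UNIV. matrix_unit j j) $ s $ m) * v $ s)"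
      by (simp add: Modules.additive.sum[OF add] sum_component sum_distrib_right)
    also have "\<dots> = v $ m"
      by (simp add: sum_matrix_unit_diagonal one)
        (simp add: mat_def if_distrib if_distribR sum.delta cong: if_cong)
    finally show ?thesis ..
  qed
  then show ?thesis
    by (simp add: kernel vec_eq_iff)
qed

lemma gram_sum_kernel:
  fixes c :: "'k::finite \<Rightarrow> complex^'n^'m"
  assumes "(\<Sum>k\<in>UNIV. c k ** conj_transpose (c k)) *v v = 0"
  shows "conj_transpose (c k) *v v = 0"
proof -
  have "0 = inner ((\<Sum>k\<in>UNIV. c k ** conj_transpose (c k)) *v v) v"
    by (simp add: assms)
  also have "\<dots> = (\<Sum>k\<in>UNIV. inner (conj_transpose (c k) *v v) (conj_transpose (c k) *v v))"
    by (simp add: sum_matrix_vector_mult inner_sum_left inner_matrix_vector_mult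
        flip: matrix_vector_mul_assoc)
  finally show ?thesis
    by (simp add: sum_nonneg_eq_0_iff inner_ge_zero)
qed

lemma intertwiners_resolve_identity:
  fixes M1 :: "'h1::finite op set" and M2 :: "'h2::finite op set"
  assumes M1: "vN_algebra M1" and M2: "vN_algebra M2" and iso: "star_iso \<phi> M1 M2"
  obtains c :: "'h1 \<times> 'h2 \<Rightarrow> complex^'h1^'h2" and d
  where "\<And>k. c k \<in> intertwiners \<phi> M1" and "\<And>k. d k \<in> intertwiners (inv_into M1 \<phi>) M2"
    and "(\<Sum>k\<in>UNIV. c k ** d k) = mat 1"
proof -
  let ?\<theta> = "inv_into M1 \<phi>"
  define G where "G x = \<phi> (orth_proj M1 x)" for x
  note add = orth_proj_module_map(1)[OF M1 M2 iso, folded G_def]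
    and scale = orth_proj_module_map(2)[OF M1 M2 iso, folded G_def]
    and mult = orth_proj_module_map(3)[OF M1 M2 iso, folded G_def]
    and one = orth_proj_module_map(4)[OF M1 M2 iso, folded G_def]
  have s: "slice G k \<in> intertwiners \<phi> M1" for k
    using slice_intertwiner[OF add scale mult] .
  have s_adj: "conj_transpose (slice G k) \<in> intertwiners ?\<theta> M2" for k
    using conj_transpose_intertwiner[OF M1 iso s] .
  define S where "S = (\<Sum>k\<in>UNIV. slice G k ** conj_transpose (slice G k))"
  have "S \<in> commutant M2"
    unfolding S_def
  proof (rule sum_in_commutant, rule intertwiner_mult_intertwiner[OF s_adj s])
    fix y assume "y \<in> M2"
    then show "?\<theta> y \<in> M1 \<and> \<phi> (?\<theta> y) = y"
      using star_iso_in[OF star_iso_inv_into[OF M1 iso]] star_iso_inv_into_right[OF iso] by blast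
  qed
  moreover obtain T where TS: "T ** S = mat 1"
    using matrix_left_invertible_ker[of S] gram_sum_kernel[of "slice G"]
      slice_conj_transpose_kernel[OF add one] by (auto simp: S_def)
  moreover have "S ** T = mat 1"
    using TS matrix_left_right_inverse by blast
  ultimately have "T \<in> commutant M2"
    by (rule inverse_in_commutant)
  then have "T ** slice G k \<in> intertwiners \<phi> M1" for k
    using commutant_mult_intertwiner[OF _ _ s] star_iso_image[OF iso] by blast
  moreover have "(\<Sum>k\<in>UNIV. T ** slice G k ** conj_transpose (slice G k)) = mat 1"
    using TS by (simp add: S_def matrix_mul_sum matrix_mul_assoc)
  ultimately show ?thesis
    using that[of "\<lambda>k. T ** slice G k" "\<lambda>k. conj_transpose (slice G k)"] s_adj by blast
qed

section \<open>Change of the left algebra\<close>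

definition intertwined_span ::
  "(complex^'h1^'h2) set \<Rightarrow> (complex^'h2^'h1) set \<Rightarrow>
    ('h1::finite \<times> 'k::finite) op set \<Rightarrow> ('h2::finite \<times> 'k) op set"
  where "intertwined_span A B V =
    cspan {tensor_mat c (mat 1) ** X ** tensor_mat d (mat 1) | c d X. c \<in> A \<and> d \<in> B \<and> X \<in> V}"

lemma csubspace_intertwined_span: "csubspace (intertwined_span A B V)"
  by (simp add: intertwined_span_def csubspace_cspan)

lemma intertwined_span_generator:
  "c \<in> A \<Longrightarrow> d \<in> B \<Longrightarrow> X \<in> V \<Longrightarrow>
    tensor_mat c (mat 1) ** X ** tensor_mat d (mat 1) \<in> intertwined_span A B V"
  unfolding intertwined_span_def by (rule cspan_superset[THEN subsetD]) blast

lemma intertwined_span_sandwich_into: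
  assumes W: "csubspace W" and Y: "Y \<in> intertwined_span A B V"
    and gen: "\<And>c d X. c \<in> A \<Longrightarrow> d \<in> B \<Longrightarrow> X \<in> V \<Longrightarrow>
      P ** (tensor_mat c (mat 1) ** X ** tensor_mat d (mat 1)) ** Q \<in> W"
  shows "P ** Y ** Q \<in> W"
  using Y unfolding intertwined_span_def
  by (rule cspan_map_into[OF matrix_mul_add_mul matrix_mul_cscale_mul W, rotated]) (blast intro: gen)

lemma ampliation_sandwich_BH_tensor:
  fixes X :: "('h1::finite \<times> 'k::finite) op" and c :: "complex^'h1^'h2::finite"
  assumes X: "X \<in> BH_tensor N"
  shows "tensor_mat c (mat 1) ** X ** tensor_mat d (mat 1) \<in> BH_tensor N"
  using X unfolding BH_tensor_def
proof (rule cspan_map_into[OF matrix_mul_add_mul matrix_mul_cscale_mul csubspace_cspan, rotated])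
  fix T :: "('h1 \<times> 'k) op" assume "T \<in> {tensor_op a b |a b. b \<in> N}"
  then obtain a b where "T = tensor_op a b" "b \<in> N"
    by blast
  then have "tensor_mat c (mat 1) ** T ** tensor_mat d (mat 1) = tensor_op (c ** a ** d) b"
    by (simp add: tensor_op_eq_tensor_mat tensor_mat_mult)
  with \<open>b \<in> N\<close> show "tensor_mat c (mat 1) ** T ** tensor_mat d (mat 1) \<in> cspan {tensor_op a b |a b. b \<in> N}"
    by (blast intro: cspan_superset[THEN subsetD])
qed

lemma intertwined_span_subset_BH_tensor:
  "V \<subseteq> BH_tensor N \<Longrightarrow> intertwined_span A B V \<subseteq> BH_tensor N"
  unfolding intertwined_span_def BH_tensor_def[of N]
  by (rule cspan_minimal[OF csubspace_cspan])
    (auto intro: ampliation_sandwich_BH_tensor[unfolded BH_tensor_def])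

lemma quantum_multi_relation_intertwined_span:
  fixes A :: "(complex^'h1::finite^'h2::finite) set" and B :: "(complex^'h2^'h1) set"
    and V :: "('h1 \<times> 'k::finite) op set"
  assumes left: "\<And>a c. a \<in> commutant M \<Longrightarrow> c \<in> A \<Longrightarrow> a ** c \<in> A"
    and right: "\<And>d b. d \<in> B \<Longrightarrow> b \<in> commutant M \<Longrightarrow> d ** b \<in> B"
    and V: "quantum_multi_relation M' N V"
  shows "quantum_multi_relation M N (intertwined_span A B V)"
proof -
  have VB: "V \<subseteq> BH_tensor N"
    and center: "\<And>z X. z \<in> center N \<Longrightarrow> X \<in> V \<Longrightarrow> tensor_op (mat 1) z ** X \<in> V"
    using V unfolding quantum_multi_relation_def by auto
  have "intertwined_span A B V \<subseteq> BH_tensor N"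
    using VB by (rule intertwined_span_subset_BH_tensor)
  moreover have "tensor_op a (mat 1) ** Y ** tensor_op b (mat 1) \<in> intertwined_span A B V"
    if a: "a \<in> commutant M" and b: "b \<in> commutant M" and Y: "Y \<in> intertwined_span A B V" for a b Y
  proof (rule intertwined_span_sandwich_into[OF csubspace_intertwined_span Y])
    fix c d X assume "c \<in> A" "d \<in> B" "X \<in> V"
    then show "tensor_op a (mat 1) ** (tensor_mat c (mat 1) ** X ** tensor_mat d (mat 1))
        ** tensor_op b (mat 1) \<in> intertwined_span A B V"
      using intertwined_span_generator[OF left[OF a] right[OF _ b]]
      by (simp add: tensor_op_eq_tensor_mat tensor_mat_mult_ampliation matrix_mul_assoc)
  qed
  moreover have "tensor_op (mat 1) z ** Y \<in> intertwined_span A B V"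
    if z: "z \<in> center N" and Y: "Y \<in> intertwined_span A B V" for z Y
  proof -
    have "tensor_op (mat 1) z ** Y ** mat 1 \<in> intertwined_span A B V"
    proof (rule intertwined_span_sandwich_into[OF csubspace_intertwined_span Y])
      fix c d X assume "c \<in> A" "d \<in> B" "X \<in> V"
      then show "tensor_op (mat 1) z ** (tensor_mat c (mat 1) ** X ** tensor_mat d (mat 1)) ** mat 1
          \<in> intertwined_span A B V"
        using intertwined_span_generator[OF _ _ center[OF z]]
        by (simp add: tensor_op_eq_tensor_mat tensor_mat_mult matrix_mul_assoc)
    qed
    then show ?thesis
      by simp
  qed
  ultimately show ?thesis
    unfolding quantum_multi_relation_def using csubspace_intertwined_span by blast
qed

lemma intertwined_span_inverse:
  fixes A :: "(complex^'h1::finite^'h2::finite) set" and B :: "(complex^'h2^'h1) set"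
    and V :: "('h1 \<times> 'k::finite) op set"
    and d :: "'i::finite \<Rightarrow> complex^'h2^'h1" and c :: "'i \<Rightarrow> complex^'h1^'h2"
  assumes commute: "\<And>d c. d \<in> B \<Longrightarrow> c \<in> A \<Longrightarrow> d ** c \<in> commutant M"
    and d: "\<And>i. d i \<in> B" and c: "\<And>i. c i \<in> A" and one: "(\<Sum>i\<in>UNIV. d i ** c i) = mat 1"
    and V: "quantum_multi_relation M N V"
  shows "intertwined_span B A (intertwined_span A B V) = V"
proof
  have CV: "csubspace V"
    and sandwich: "\<And>a b X. a \<in> commutant M \<Longrightarrow> b \<in> commutant M \<Longrightarrow> X \<in> V \<Longrightarrow>
        tensor_op a (mat 1) ** X ** tensor_op b (mat 1) \<in> V"
    using V unfolding quantum_multi_relation_def by auto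
  show "intertwined_span B A (intertwined_span A B V) \<subseteq> V"
    unfolding intertwined_span_def[of B A]
  proof (rule cspan_minimal[OF CV], safe)
    fix d' c' Y assume "d' \<in> B" "c' \<in> A" "Y \<in> intertwined_span A B V"
    show "tensor_mat d' (mat 1) ** Y ** tensor_mat c' (mat 1) \<in> V"
    proof (rule intertwined_span_sandwich_into[OF CV \<open>Y \<in> intertwined_span A B V\<close>])
      fix c'' d'' X assume "c'' \<in> A" "d'' \<in> B" "X \<in> V"
      then show "tensor_mat d' (mat 1) ** (tensor_mat c'' (mat 1) ** X ** tensor_mat d'' (mat 1))
          ** tensor_mat c' (mat 1) \<in> V"
        using sandwich[OF commute[OF \<open>d' \<in> B\<close>] commute[OF _ \<open>c' \<in> A\<close>]]
        by (simp add: tensor_op_eq_tensor_mat tensor_mat_mult_ampliation matrix_mul_assoc)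
    qed
  qed
  show "V \<subseteq> intertwined_span B A (intertwined_span A B V)"
  proof
    fix X assume X: "X \<in> V"
    have "X = tensor_mat (mat 1) (mat 1) ** X ** tensor_mat (mat 1) (mat 1)"
      by (simp add: tensor_mat_one)
    also have "\<dots> = (\<Sum>i\<in>UNIV. \<Sum>j\<in>UNIV.
        tensor_mat (d i) (mat 1) ** (tensor_mat (c i) (mat 1) ** X ** tensor_mat (d j) (mat 1)) ** tensor_mat (c j) (mat 1))"
      by (simp add: one[symmetric] tensor_mat_sum_left sum_matrix_mul matrix_mul_sum
          tensor_mat_mult_ampliation matrix_mul_assoc) (rule sum.swap)
    also have "\<dots> \<in> intertwined_span B A (intertwined_span A B V)"
      by (intro csubspace_sum csubspace_intertwined_span intertwined_span_generator c d X)
    finally show "X \<in> intertwined_span B A (intertwined_span A B V)" .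
  qed
qed

lemma intertwiners_inv_into_inv_into:
  assumes M1: "vN_algebra M1" and iso: "star_iso \<phi> M1 M2"
  shows "intertwiners (inv_into M2 (inv_into M1 \<phi>)) M1 = intertwiners \<phi> M1"
proof -
  have "inv_into M2 (inv_into M1 \<phi>) x = \<phi> x" if "x \<in> M1" for x
    using star_iso_inv_into_left[OF star_iso_inv_into[OF M1 iso] star_iso_in[OF iso that]]
    by (simp add: star_iso_inv_into_left[OF iso that])
  then show ?thesis
    by (simp add: intertwiners_def)
qed

lemma bij_betw_quantum_multi_relations_left:
  fixes M1 :: "'h1::finite op set" and M2 :: "'h2::finite op set" and N :: "'k::finite op set"
  assumes M1: "vN_algebra M1" and M2: "vN_algebra M2" and iso: "star_iso \<phi> M1 M2"
  defines "A \<equiv> intertwiners \<phi> M1" and "B \<equiv> intertwiners (inv_into M1 \<phi>) M2"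
  shows "bij_betw (intertwined_span A B :: ('h1 \<times> 'k) op set \<Rightarrow> _)
    {V. quantum_multi_relation M1 N V} {V. quantum_multi_relation M2 N V}"
proof -
  let ?\<theta> = "inv_into M1 \<phi>"
  have iso': "star_iso ?\<theta> M2 M1"
    using M1 iso by (rule star_iso_inv_into)
  have \<theta>_\<phi>: "\<phi> x \<in> M2 \<and> ?\<theta> (\<phi> x) = x" if "x \<in> M1" for x
    using that star_iso_in[OF iso] star_iso_inv_into_left[OF iso] by blast
  have \<phi>_\<theta>: "?\<theta> y \<in> M1 \<and> \<phi> (?\<theta> y) = y" if "y \<in> M2" for y
    using that star_iso_in[OF iso'] star_iso_inv_into_right[OF iso] by blast
  obtain c :: "'h1 \<times> 'h2 \<Rightarrow> _" and d where c: "\<And>k. c k \<in> A" and d: "\<And>k. d k \<in> B"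
    and cd: "(\<Sum>k\<in>UNIV. c k ** d k) = mat 1"
    by (rule intertwiners_resolve_identity[OF M1 M2 iso, folded A_def B_def]) blast
  obtain d' :: "'h2 \<times> 'h1 \<Rightarrow> _" and c' where d': "\<And>k. d' k \<in> B" and c': "\<And>k. c' k \<in> A"
    and dc: "(\<Sum>k\<in>UNIV. d' k ** c' k) = mat 1"
    by (rule intertwiners_resolve_identity[OF M2 M1 iso',
          unfolded intertwiners_inv_into_inv_into[OF M1 iso], folded A_def B_def]) blast
  have BA: "d ** c \<in> commutant M1" if "d \<in> B" "c \<in> A" for c d
    using intertwiner_mult_intertwiner[OF that(2)[unfolded A_def] that(1)[unfolded B_def] \<theta>_\<phi>] .
  have AB: "c ** d \<in> commutant M2" if "c \<in> A" "d \<in> B" for c d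
    using intertwiner_mult_intertwiner[OF that(2)[unfolded B_def] that(1)[unfolded A_def] \<phi>_\<theta>] .
  show ?thesis
  proof (rule bij_betw_byWitness[where f' = "intertwined_span B A"])
    show "\<forall>V\<in>{V. quantum_multi_relation M1 N V}. intertwined_span B A (intertwined_span A B V) = V"
      using intertwined_span_inverse[OF BA d' c' dc] by blast
    show "\<forall>V\<in>{V. quantum_multi_relation M2 N V}. intertwined_span A B (intertwined_span B A V) = V"
      using intertwined_span_inverse[OF AB c d cd] by blast
    have img: "\<phi> ` M1 \<subseteq> M2" and img': "?\<theta> ` M2 \<subseteq> M1"
      using \<theta>_\<phi> \<phi>_\<theta> by auto
    have left2: "\<And>a c. a \<in> commutant M2 \<Longrightarrow> c \<in> A \<Longrightarrow> a ** c \<in> A"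
      unfolding A_def by (rule commutant_mult_intertwiner[OF img])
    have left1: "\<And>b d. b \<in> commutant M1 \<Longrightarrow> d \<in> B \<Longrightarrow> b ** d \<in> B"
      unfolding B_def by (rule commutant_mult_intertwiner[OF img'])
    have right2: "\<And>d b. d \<in> B \<Longrightarrow> b \<in> commutant M2 \<Longrightarrow> d ** b \<in> B"
      unfolding B_def by (rule intertwiner_mult_commutant)
    have right1: "\<And>c a. c \<in> A \<Longrightarrow> a \<in> commutant M1 \<Longrightarrow> c ** a \<in> A"
      unfolding A_def by (rule intertwiner_mult_commutant)
    show "intertwined_span A B ` {V. quantum_multi_relation M1 N V} \<subseteq> {V. quantum_multi_relation M2 N V}"
      by (auto intro: quantum_multi_relation_intertwined_span[OF left2 right2])
    show "intertwined_span B A ` {V. quantum_multi_relation M2 N V} \<subseteq> {V. quantum_multi_relation M1 N V}"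
      by (auto intro: quantum_multi_relation_intertwined_span[OF left1 right1])
  qed
qed

theorem theorem4p3:
  fixes M1 :: "'h1::finite op set" and N1 :: "'k1::finite op set"
    and M2 :: "'h2::finite op set" and N2 :: "'k2::finite op set"
  assumes "vN_algebra M1" and "vN_algebra N1" and "vN_algebra M2" and "vN_algebra N2"
    and "vN_isomorphic M1 M2" and "vN_isomorphic N1 N2"
  shows "\<exists>f. bij_betw f {V. quantum_multi_relation M1 N1 V} {V. quantum_multi_relation M2 N2 V}"
proof -
  obtain \<phi> where \<phi>: "star_iso \<phi> M1 M2"
    using assms(5) by (auto simp: vN_isomorphic_def)
  obtain \<psi> where \<psi>: "star_iso \<psi> N1 N2"
    using assms(6) by (auto simp: vN_isomorphic_def)
  have "bij_betw (intertwined_span (intertwiners \<phi> M1) (intertwiners (inv_into M1 \<phi>) M2))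
      {V. quantum_multi_relation M1 N1 V} {V. quantum_multi_relation M2 N1 V}"
    using assms(1,3) \<phi> by (rule bij_betw_quantum_multi_relations_left)
  moreover have "bij_betw (image (map_blocks \<psi>))
      {V. quantum_multi_relation M2 N1 V} {V. quantum_multi_relation M2 N2 V}"
    using assms(2,4) \<psi> by (rule bij_betw_quantum_multi_relations_right)
  ultimately show ?thesis
    by (blast intro: bij_betw_trans)
qed

end
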